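(* Let $k\ge 4$ and $n\ge 11k$. Then for every ordered $k$-tuple $S=(v_1,\dots,v_k)\in V(Q_n)^k$ of vertices of $Q_n$ (repetitions allowed), there exists an $S$-subdivided closed walk in $Q_n$.
   Context: $Q_n$ is the $n$-dimensional discrete binary cube: vertex set $\{0,1\}^n$, two vectors adjacent iff they differ in exactly one coordinate. For a graph $G$ and $S=(v_1,\dots,v_k)\in V(G)^k$ (repetitions permitted), with indices taken modulo $k$, an $S$-subdivided closed walk is a sequence $W=(v_1,P_1,v_2,P_2,\dots,v_k,P_k,v_1)$ such that each $P_i$ is a $v_i$–$v_{i+1}$ path in $G$, no two of the paths $P_i,P_j$ ($i\ne j$) share an internal vertex, $P_i$ is trivial if $v_i=v_{i+1}$, and $P_i$ has length at least $2$ if $v_i\ne v_{i+1}$. *)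

theory Defs
  imports Main
begin

definition cube_vertex :: "nat \<Rightarrow> bool list \<Rightarrow> bool" where
  "cube_vertex n x \<longleftrightarrow> length x = n"

definition cube_adj :: "nat \<Rightarrow> bool list \<Rightarrow> bool list \<Rightarrow> bool" where
  "cube_adj n x y \<longleftrightarrow> cube_vertex n x \<and> cube_vertex n y \<and>
     card {i. i < n \<and> x ! i \<noteq> y ! i} = 1"

definition cube_path :: "nat \<Rightarrow> bool list list \<Rightarrow> bool" where
  "cube_path n p \<longleftrightarrow> p \<noteq> [] \<and> distinct p \<and> (\<forall>x\<in>set p. cube_vertex n x) \<and>
     (\<forall>i. Suc i < length p \<longrightarrow> cube_adj n (p ! i) (p ! Suc i))"

definition path_len :: "'a list \<Rightarrow> nat" where
  "path_len p = length p - 1"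

definition internal_verts :: "'a list \<Rightarrow> 'a set" where
  "internal_verts p = set (butlast (tl p))"

text \<open>S-subdivided closed walk: S = (v_1,...,v_k) given as a list of length k,
  the paths P_1,...,P_k as a list of length k (0-indexed, indices mod k).\<close>
definition subdivided_closed_walk :: "nat \<Rightarrow> bool list list \<Rightarrow> bool list list list \<Rightarrow> bool" where
  "subdivided_closed_walk n S P \<longleftrightarrow>
     (let k = length S in
       length P = k \<and>
       (\<forall>i<k. cube_path n (P ! i) \<and> hd (P ! i) = S ! i \<and>
              last (P ! i) = S ! ((i + 1) mod k) \<and>
              (S ! i = S ! ((i + 1) mod k) \<longrightarrow> path_len (P ! i) = 0) \<and>
              (S ! i \<noteq> S ! ((i + 1) mod k) \<longrightarrow> path_len (P ! i) \<ge> 2)) \<and>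
       (\<forall>i<k. \<forall>j<k. i \<noteq> j \<longrightarrow> internal_verts (P ! i) \<inter> internal_verts (P ! j) = {}))"

end

theory Submission
  imports Defs
begin

(*
  Split the n coordinates into a low block [0,k), a mid block [k,2k) and a high block [2k,n).
  The i-th path leaves v_i by flipping one high coordinate, rewrites the mid block to the
  indicator of i and the low block to the complement of the diagonal (v_l ! l)_l, then
  rewrites the high block, and finally approaches v_(i+1) symmetrically, entering it across
  another flipped high coordinate. The 2k flipped coordinates are chosen greedily so that the
  high blocks of the 2k vertices next to the endpoints are pairwise distinct and differ from
  the high block of every v_l; this only needs n - 2k >= 3k. Each internal vertex then
  determines, from its coordinates alone, the path it lies on and the segment of that path,
  so the paths are internally disjoint and none of them meets an endpoint internally.
*)

section \<open>Walks by coordinate flips\<close>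

definition flip :: "nat \<Rightarrow> bool list \<Rightarrow> bool list" where
  "flip c w = w[c := \<not> w ! c]"

fun flip_walk :: "bool list \<Rightarrow> nat list \<Rightarrow> bool list list" where
  "flip_walk z [] = [z]"
| "flip_walk z (c # cs) = z # flip_walk (flip c z) cs"

lemma length_flip [simp]: "length (flip c w) = length w"
  by (simp add: flip_def)

lemma nth_flip: "flip c w ! j = (if j = c \<and> c < length w then \<not> w ! j else w ! j)"
  by (cases "c < length w") (auto simp: flip_def nth_list_update list_update_beyond)

lemma flip_flip [simp]: "flip c (flip c w) = w"
  by (cases "c < length w") (simp_all add: flip_def list_update_beyond)

lemma flip_walk_not_Nil [simp]: "flip_walk z cs \<noteq> []"
  by (cases cs) auto

lemma length_flip_walk [simp]: "length (flip_walk z cs) = Suc (length cs)"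
  by (induction cs arbitrary: z) auto

lemma length_fold_flip [simp]: "length (fold flip cs z) = length z"
  by (induction cs arbitrary: z) auto

lemma flip_walk_append:
  "flip_walk z (cs @ ds) = flip_walk z cs @ tl (flip_walk (fold flip cs z) ds)"
proof (induction cs arbitrary: z)
  case Nil
  then show ?case
    by (cases ds) auto
qed simp

lemma set_flip_walk:
  assumes "w \<in> set (flip_walk z cs)"
  shows "length w = length z" and "\<And>j. j \<notin> set cs \<Longrightarrow> w ! j = z ! j"
  using assms by (induction cs arbitrary: z) (auto simp: nth_flip)

lemma set_tl_flip_walk:
  assumes "distinct cs" and "\<forall>c\<in>set cs. c < length z" and "w \<in> set (tl (flip_walk z cs))"
  shows "\<exists>c\<in>set cs. w ! c \<noteq> z ! c"
proof -
  obtain c cs' where cs: "cs = c # cs'" and "w \<in> set (flip_walk (flip c z) cs')"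
    using assms(3) by (cases cs) auto
  then have "w ! c = flip c z ! c"
    using assms(1) set_flip_walk(2) by auto
  then show ?thesis
    using cs assms(2) by (auto simp: nth_flip)
qed

lemma distinct_flip_walk:
  "distinct cs \<Longrightarrow> \<forall>c\<in>set cs. c < length z \<Longrightarrow> distinct (flip_walk z cs)"
proof (induction cs arbitrary: z)
  case (Cons c cs)
  have "z \<notin> set (flip_walk (flip c z) cs)"
  proof
    assume "z \<in> set (flip_walk (flip c z) cs)"
    then have "z ! c = flip c z ! c"
      using Cons.prems(1) set_flip_walk(2) by fastforce
    then show False
      using Cons.prems by (simp add: nth_flip)
  qed
  then show ?case
    using Cons by simp
qed simp

lemma cube_adj_flip: "length z = n \<Longrightarrow> c < n \<Longrightarrow> cube_adj n z (flip c z)"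
proof -
  assume "length z = n" "c < n"
  then have "{i. i < n \<and> z ! i \<noteq> flip c z ! i} = {c}"
    by (auto simp: nth_flip)
  then show ?thesis
    using \<open>length z = n\<close> by (simp add: cube_adj_def cube_vertex_def)
qed

lemma successively_cube_adj_flip_walk:
  "length z = n \<Longrightarrow> \<forall>c\<in>set cs. c < n \<Longrightarrow> successively (cube_adj n) (flip_walk z cs)"
proof (induction cs arbitrary: z)
  case (Cons c cs)
  then show ?case
    by (cases cs) (auto simp: cube_adj_flip)
qed simp

lemma cube_path_flip_walk:
  assumes "length z = n" and "\<forall>c\<in>set cs. c < n" and "distinct (flip_walk z cs)"
  shows "cube_path n (flip_walk z cs)"
  using assms successively_cube_adj_flip_walk[OF assms(1,2)] set_flip_walk(1)[of _ z cs]
  by (auto simp: cube_path_def cube_vertex_def successively_conv_nth)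

definition diff_coords :: "bool list \<Rightarrow> bool list \<Rightarrow> nat list" where
  "diff_coords z z' = filter (\<lambda>c. z ! c \<noteq> z' ! c) [0..<length z]"

definition geodesic :: "bool list \<Rightarrow> bool list \<Rightarrow> bool list list" where
  "geodesic z z' = flip_walk z (diff_coords z z')"

lemma fold_flip_distinct:
  "distinct cs \<Longrightarrow> fold flip cs z ! j = (if j \<in> set cs \<and> j < length z then \<not> z ! j else z ! j)"
  by (induction cs arbitrary: z) (auto simp: nth_flip)

lemma fold_flip_diff_coords: "length z = length z' \<Longrightarrow> fold flip (diff_coords z z') z = z'"
  by (rule nth_equalityI) (auto simp: diff_coords_def fold_flip_distinct)

lemma geodesic_not_Nil [simp]: "geodesic z z' \<noteq> []"
  by (simp add: geodesic_def)

lemma distinct_geodesic: "distinct (geodesic z z')"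
  by (simp add: geodesic_def diff_coords_def distinct_flip_walk)

lemma set_geodesic:
  assumes "w \<in> set (geodesic z z')"
  shows "length w = length z" and "\<And>j. z ! j = z' ! j \<Longrightarrow> w ! j = z ! j"
  using assms set_flip_walk[of w z "diff_coords z z'"]
  by (auto simp: geodesic_def diff_coords_def)

lemma set_tl_geodesic:
  assumes "w \<in> set (tl (geodesic z z'))"
  shows "\<exists>j<length z. z ! j \<noteq> z' ! j \<and> w ! j \<noteq> z ! j"
proof -
  have "distinct (diff_coords z z')" and "\<forall>c\<in>set (diff_coords z z'). c < length z"
    by (simp_all add: diff_coords_def)
  then obtain j where "j \<in> set (diff_coords z z')" and "w ! j \<noteq> z ! j"
    using set_tl_flip_walk assms unfolding geodesic_def by blast
  then show ?thesis
    by (auto simp: diff_coords_def)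
qed

lemma flip_walk_diff_coords_append:
  "length z = length z' \<Longrightarrow> flip_walk z (diff_coords z z' @ cs) = geodesic z z' @ tl (flip_walk z' cs)"
  by (simp add: flip_walk_append fold_flip_diff_coords geodesic_def)

definition override_coords :: "nat set \<Rightarrow> bool list \<Rightarrow> bool list \<Rightarrow> bool list" where
  "override_coords A u z = map (override_on ((!) z) ((!) u) A) [0..<length z]"

lemma length_override_coords [simp]: "length (override_coords A u z) = length z"
  by (simp add: override_coords_def)

lemma nth_override_coords:
  "j < length z \<Longrightarrow> override_coords A u z ! j = (if j \<in> A then u ! j else z ! j)"
  by (simp add: override_coords_def override_on_def)

lemma set_geodesic_override:
  assumes "w \<in> set (geodesic z (override_coords A u z))"
  shows "\<forall>j<length z. j \<notin> A \<longrightarrow> w ! j = z ! j"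
  using assms set_geodesic(2) by (simp add: nth_override_coords)

lemma set_tl_geodesic_override:
  assumes "w \<in> set (tl (geodesic z (override_coords A u z)))"
  shows "\<forall>j<length z. j \<notin> A \<longrightarrow> w ! j = z ! j" and "\<exists>j\<in>A. j < length z \<and> w ! j \<noteq> z ! j"
  using set_geodesic_override[OF list.set_sel(2)[OF geodesic_not_Nil assms]]
    set_tl_geodesic[OF assms] by (auto simp: nth_override_coords split: if_splits)

definition agrees :: "nat set \<Rightarrow> bool list \<Rightarrow> bool list \<Rightarrow> bool" where
  "agrees A w u \<longleftrightarrow> (\<forall>j\<in>A. w ! j = u ! j)"

lemma agrees_euclidean: "agrees A w u \<Longrightarrow> agrees A w u' \<Longrightarrow> agrees A u u'"
  by (simp add: agrees_def)

lemma agrees_iff_drop: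
  assumes "length u = n" and "length u' = n"
  shows "agrees {m..<n} u u' \<longleftrightarrow> drop m u = drop m u'"
  using assms by (auto simp: agrees_def list_eq_iff_nth_eq) (metis le_add_diff_inverse diff_less_mono)+

lemma distinct_concat_map:
  assumes "distinct xs" and "\<And>x. x \<in> set xs \<Longrightarrow> distinct (f x)"
    and "\<And>x y. x \<in> set xs \<Longrightarrow> y \<in> set xs \<Longrightarrow> x \<noteq> y \<Longrightarrow> set (f x) \<inter> set (f y) = {}"
  shows "distinct (concat (map f xs))"
  using assms by (induction xs) auto

section \<open>Greedy choice of distinct fresh images\<close>

lemma inj_on_exists_image_notin:
  assumes "finite B" and "inj_on h C" and "card B < card C"
  obtains r where "r \<in> C" and "h r \<notin> B"
proof -
  have "\<not> h ` C \<subseteq> B"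
    using card_inj_on_le[OF assms(2) _ assms(1)] assms(3) by linarith
  then show thesis
    using that by blast
qed

lemma greedy_distinct_choice:
  assumes "finite T" and "finite F" and "finite C"
    and "\<And>t. t \<in> T \<Longrightarrow> inj_on (g t) C" and "card T + card F \<le> card C"
  shows "\<exists>f. (\<forall>t\<in>T. f t \<in> C \<and> g t (f t) \<notin> F) \<and> inj_on (\<lambda>t. g t (f t)) T"
  using assms(1,4,5)
proof (induction T rule: finite_induct)
  case (insert x T)
  then obtain f where f: "\<forall>t\<in>T. f t \<in> C \<and> g t (f t) \<notin> F" "inj_on (\<lambda>t. g t (f t)) T"
    by auto
  let ?used = "F \<union> (\<lambda>t. g t (f t)) ` T"
  have "card ?used \<le> card F + card T"
    using card_Un_le card_image_le[OF \<open>finite T\<close>] by (meson add_left_mono order_trans)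
  also have "\<dots> < card C"
    using insert by simp
  finally obtain r where r: "r \<in> C" "g x r \<notin> ?used"
    using inj_on_exists_image_notin[of ?used "g x" C] insert.hyps(1) insert.prems(1) assms(2) by blast
  define f' where "f' = f(x := r)"
  have f'_T: "f' t = f t" if "t \<in> T" for t
    using that insert.hyps(2) unfolding f'_def by auto
  have "\<forall>t\<in>insert x T. f' t \<in> C \<and> g t (f' t) \<notin> F"
    using f(1) r by (simp add: f'_T f'_def)
  moreover have "inj_on (\<lambda>t. g t (f' t)) T"
    using f(2) inj_on_cong[of T "\<lambda>t. g t (f' t)"] f'_T by simp
  moreover have "g x (f' x) \<notin> (\<lambda>t. g t (f' t)) ` T"
    using r(2) f'_T by (simp add: f'_def)
  ultimately show ?case
    using insert.hyps(2) by auto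
qed simp

section \<open>Internally disjoint paths through hubs\<close>

definition endpoint :: "bool list list \<Rightarrow> nat \<times> bool \<Rightarrow> bool list" where
  "endpoint S = (\<lambda>(i, b). S ! (if b then Suc i mod length S else i))"

lemma endpoint_in_set: "i < length S \<Longrightarrow> endpoint S (i, b) \<in> set S"
  by (cases "S = []") (auto simp: endpoint_def)

datatype phase = Depart | Approach | Transit | Leave | Arrive

definition phases :: "phase list" where
  "phases = [Depart, Approach, Transit, Leave, Arrive]"

text \<open>\<open>tag (i, False)\<close> is the high coordinate flipped when leaving \<open>v_i\<close> and
  \<open>tag (i, True)\<close> the one flipped when entering \<open>v_(i+1)\<close>.\<close>

locale tour =
  fixes n k :: nat and S :: "bool list list" and tag :: "nat \<times> bool \<Rightarrow> nat"
  assumes length_S: "length S = k" and k_pos: "0 < k"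
    and length_vertex: "\<And>v. v \<in> set S \<Longrightarrow> length v = n"
    and tag_range: "\<And>t. t \<in> {..<k} \<times> UNIV \<Longrightarrow> 2 * k \<le> tag t \<and> tag t < n"
    and tag_fresh: "\<And>t. t \<in> {..<k} \<times> UNIV \<Longrightarrow>
      drop (2 * k) (flip (tag t) (endpoint S t)) \<notin> drop (2 * k) ` set S"
    and tag_inj: "inj_on (\<lambda>t. drop (2 * k) (flip (tag t) (endpoint S t))) ({..<k} \<times> UNIV)"
begin

definition low :: "nat set" where "low = {..<k}"
definition mid :: "nat set" where "mid = {k..<2 * k}"
definition high :: "nat set" where "high = {2 * k..<n}"

abbreviation start :: "nat \<Rightarrow> bool list" where "start i \<equiv> endpoint S (i, False)"
abbreviation stop :: "nat \<Rightarrow> bool list" where "stop i \<equiv> endpoint S (i, True)"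

definition tagged :: "nat \<times> bool \<Rightarrow> bool list" where
  "tagged t = flip (tag t) (endpoint S t)"

abbreviation src :: "nat \<Rightarrow> bool list" where "src i \<equiv> tagged (i, False)"
abbreviation dst :: "nat \<Rightarrow> bool list" where "dst i \<equiv> tagged (i, True)"

text \<open>The low block of \<open>hub i\<close> is the complement of the diagonal of \<open>S\<close>, so it differs
  from every \<open>v_l\<close> in coordinate \<open>l\<close>; the mid block is the indicator of \<open>i\<close>.\<close>

definition hub :: "nat \<Rightarrow> bool list" where
  "hub i = map (\<lambda>j. if j < k then \<not> S ! j ! j else j = k + i) [0..<2 * k]"

definition to_hub :: "nat \<Rightarrow> bool list" where
  "to_hub i = override_coords mid (hub i) (src i)"
definition hub_src :: "nat \<Rightarrow> bool list" where
  "hub_src i = override_coords low (hub i) (to_hub i)"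
definition hub_dst :: "nat \<Rightarrow> bool list" where
  "hub_dst i = override_coords high (dst i) (hub_src i)"
definition from_hub :: "nat \<Rightarrow> bool list" where
  "from_hub i = override_coords low (stop i) (hub_dst i)"

lemmas block_defs = low_def mid_def high_def
lemmas corner_defs = to_hub_def hub_src_def hub_dst_def from_hub_def

lemma start_eq: "start i = S ! i" and stop_eq: "stop i = S ! (Suc i mod k)"
  by (simp_all add: endpoint_def length_S)

lemma length_endpoint [simp]: "i < k \<Longrightarrow> length (endpoint S (i, b)) = n"
  using endpoint_in_set length_S length_vertex by blast

lemma length_tagged [simp]: "i < k \<Longrightarrow> length (tagged (i, b)) = n"
  by (simp add: tagged_def)

lemma nth_tagged: "i < k \<Longrightarrow> j < 2 * k \<Longrightarrow> tagged (i, b) ! j = endpoint S (i, b) ! j"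
  using tag_range[of "(i, b)"] by (simp add: tagged_def nth_flip)

lemma double_k_less_n: "2 * k < n"
  using tag_range[of "(0, False)"] k_pos by simp

lemma length_corners [simp]:
  "i < k \<Longrightarrow> length (to_hub i) = n" "i < k \<Longrightarrow> length (hub_src i) = n"
  "i < k \<Longrightarrow> length (hub_dst i) = n" "i < k \<Longrightarrow> length (from_hub i) = n"
  by (simp_all add: corner_defs)

lemma nth_hub: "j < 2 * k \<Longrightarrow> hub i ! j = (if j < k then \<not> S ! j ! j else j = k + i)"
  by (simp add: hub_def)

lemma dst_eq_override: "i < k \<Longrightarrow> dst i = override_coords mid (stop i) (from_hub i)"
  by (rule nth_equalityI)
    (auto simp: nth_override_coords nth_tagged block_defs corner_defs)

definition in_phase :: "nat \<Rightarrow> phase \<Rightarrow> bool list \<Rightarrow> bool" where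
  "in_phase i p w = (case p of
     Depart \<Rightarrow> agrees high w (src i) \<and> agrees low w (start i)
   | Approach \<Rightarrow> agrees high w (src i) \<and> agrees mid w (hub i) \<and> \<not> agrees low w (start i)
   | Transit \<Rightarrow> agrees low w (hub i) \<and> agrees mid w (hub i) \<and> \<not> agrees high w (src i)
   | Leave \<Rightarrow> agrees high w (dst i) \<and> agrees mid w (hub i) \<and> \<not> agrees low w (hub i)
   | Arrive \<Rightarrow> agrees high w (dst i) \<and> agrees low w (stop i) \<and> \<not> agrees mid w (hub i))"

lemma agrees_high_tagged_unique:
  assumes "agrees high w (tagged (i, b))" and "agrees high w (tagged (j, c))" and "i < k" and "j < k"
  shows "i = j \<and> b = c"
proof -
  have "drop (2 * k) (tagged (i, b)) = drop (2 * k) (tagged (j, c))"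
    using agrees_euclidean[OF assms(1,2)] assms(3,4) by (simp add: high_def agrees_iff_drop)
  then have "(i, b) = (j, c)"
    using inj_onD[OF tag_inj, of "(i, b)" "(j, c)"] assms(3,4) unfolding tagged_def by simp
  then show ?thesis
    by simp
qed

lemma not_agrees_high_vertex_tagged:
  assumes "v \<in> set S" and "i < k"
  shows "\<not> agrees high v (tagged (i, b))"
proof
  assume "agrees high v (tagged (i, b))"
  then have "drop (2 * k) (tagged (i, b)) = drop (2 * k) v"
    using assms by (simp add: high_def agrees_iff_drop length_vertex)
  then have "drop (2 * k) (tagged (i, b)) \<in> drop (2 * k) ` set S"
    using assms(1) by simp
  moreover have "drop (2 * k) (tagged (i, b)) \<notin> drop (2 * k) ` set S"
    using tag_fresh[of "(i, b)"] assms(2) unfolding tagged_def by blast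
  ultimately show False
    by contradiction
qed

lemma agrees_low_vertex_not_hub:
  assumes "agrees low w (S ! l)" and "l < k"
  shows "\<not> agrees low w (hub j)"
proof -
  have "w ! l = S ! l ! l" and "hub j ! l = (\<not> S ! l ! l)"
    using assms by (simp_all add: agrees_def low_def nth_hub)
  then show ?thesis
    using assms(2) by (auto simp: agrees_def low_def)
qed

lemma agrees_mid_hub_unique:
  assumes "agrees mid w (hub i)" and "agrees mid w (hub j)" and "i < k" and "j < k"
  shows "i = j"
proof -
  have "w ! (k + i) = hub i ! (k + i)" and "w ! (k + i) = hub j ! (k + i)"
    using assms by (simp_all add: agrees_def mid_def)
  then show ?thesis
    using assms(3) by (simp add: nth_hub)
qed

lemma in_phase_TransitD:
  assumes "in_phase i Transit w" and "in_phase j q w" and "i < k" and "j < k"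
  shows "q = Transit \<and> i = j"
proof (cases q)
  case Depart
  then have "agrees low w (S ! j)" and "agrees low w (hub i)"
    using assms by (simp_all add: in_phase_def start_eq)
  then show ?thesis
    using agrees_low_vertex_not_hub assms(4) by blast
next
  case Approach
  then have "i = j"
    using assms agrees_mid_hub_unique by (auto simp: in_phase_def)
  then show ?thesis
    using assms Approach by (simp add: in_phase_def)
next
  case Transit
  then show ?thesis
    using assms agrees_mid_hub_unique by (auto simp: in_phase_def)
next
  case Leave
  then have "i = j"
    using assms agrees_mid_hub_unique by (auto simp: in_phase_def)
  then show ?thesis
    using assms Leave by (simp add: in_phase_def)
next
  case Arrive
  then have "agrees low w (S ! (Suc j mod k))" and "agrees low w (hub i)"
    using assms by (simp_all add: in_phase_def stop_eq)
  then show ?thesis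
    using agrees_low_vertex_not_hub k_pos by simp
qed

lemma in_phase_tagged:
  assumes "in_phase i p w" and "p \<noteq> Transit"
  shows "agrees high w (tagged (i, p = Leave \<or> p = Arrive))"
  using assms by (cases p) (simp_all add: in_phase_def)

lemma in_phase_unique:
  assumes "in_phase i p w" and "in_phase j q w" and "i < k" and "j < k"
  shows "i = j \<and> p = q"
proof (cases "p = Transit \<or> q = Transit")
  case True
  then show ?thesis
    using in_phase_TransitD assms by metis
next
  case False
  then have "i = j" and "(p = Leave \<or> p = Arrive) = (q = Leave \<or> q = Arrive)"
    using agrees_high_tagged_unique[OF in_phase_tagged in_phase_tagged] assms by blast+
  then show ?thesis
    using assms False by (cases p; cases q) (simp_all add: in_phase_def)
qed

lemma vertex_not_in_phase:
  assumes "l < k" and "i < k"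
  shows "\<not> in_phase i p (S ! l)"
proof -
  have "S ! l \<in> set S" and "agrees low (S ! l) (S ! l)"
    using assms length_S by (simp_all add: agrees_def)
  then show ?thesis
    using assms not_agrees_high_vertex_tagged agrees_low_vertex_not_hub
    by (cases p) (auto simp: in_phase_def)
qed

fun segment :: "nat \<Rightarrow> phase \<Rightarrow> bool list list" where
  "segment i Depart = geodesic (src i) (to_hub i)"
| "segment i Approach = tl (geodesic (to_hub i) (hub_src i))"
| "segment i Transit = tl (geodesic (hub_src i) (hub_dst i))"
| "segment i Leave = tl (geodesic (hub_dst i) (from_hub i))"
| "segment i Arrive = tl (geodesic (from_hub i) (dst i))"

lemma segment_in_phase:
  assumes "w \<in> set (segment i p)" and "i < k"
  shows "in_phase i p w"
proof (cases p)
  case Depart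
  then have "w \<in> set (geodesic (src i) (override_coords mid (hub i) (src i)))"
    using assms by (simp add: to_hub_def)
  from set_geodesic_override[OF this] show ?thesis
    using Depart assms(2) double_k_less_n
    by (auto simp: in_phase_def agrees_def block_defs corner_defs nth_override_coords nth_tagged)
next
  case Approach
  then have "w \<in> set (tl (geodesic (to_hub i) (override_coords low (hub i) (to_hub i))))"
    using assms by (simp add: hub_src_def)
  from set_tl_geodesic_override[OF this] show ?thesis
    using Approach assms(2) double_k_less_n
    by (auto simp: in_phase_def agrees_def block_defs corner_defs nth_override_coords nth_tagged)
next
  case Transit
  then have "w \<in> set (tl (geodesic (hub_src i) (override_coords high (dst i) (hub_src i))))"
    using assms by (simp add: hub_dst_def)
  from set_tl_geodesic_override[OF this] show ?thesis
    using Transit assms(2) double_k_less_n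
    by (auto simp: in_phase_def agrees_def block_defs corner_defs nth_override_coords nth_tagged)
next
  case Leave
  then have "w \<in> set (tl (geodesic (hub_dst i) (override_coords low (stop i) (hub_dst i))))"
    using assms by (simp add: from_hub_def)
  from set_tl_geodesic_override[OF this] show ?thesis
    using Leave assms(2) double_k_less_n
    by (auto simp: in_phase_def agrees_def block_defs corner_defs nth_override_coords nth_tagged)
next
  case Arrive
  then have "w \<in> set (tl (geodesic (from_hub i) (override_coords mid (stop i) (from_hub i))))"
    using assms by (simp add: dst_eq_override)
  from set_tl_geodesic_override[OF this] show ?thesis
    using Arrive assms(2) double_k_less_n
    by (auto simp: in_phase_def agrees_def block_defs corner_defs nth_override_coords nth_tagged)
qed

definition route :: "nat \<Rightarrow> nat list" where
  "route i = tag (i, False) # diff_coords (src i) (to_hub i) @ diff_coords (to_hub i) (hub_src i)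
     @ diff_coords (hub_src i) (hub_dst i) @ diff_coords (hub_dst i) (from_hub i)
     @ diff_coords (from_hub i) (dst i) @ [tag (i, True)]"

definition path :: "nat \<Rightarrow> bool list list" where
  "path i = (if start i = stop i then [start i] else flip_walk (start i) (route i))"

lemma flip_walk_route:
  assumes "i < k"
  shows "flip_walk (start i) (route i) = start i # concat (map (segment i) phases) @ [stop i]"
  using assms by (simp add: route_def phases_def flip_walk_diff_coords_append tagged_def)

lemma route_less_n: "i < k \<Longrightarrow> c \<in> set (route i) \<Longrightarrow> c < n"
  using tag_range[of "(i, False)"] tag_range[of "(i, True)"]
  by (auto simp: route_def diff_coords_def)

lemma distinct_segments:
  assumes "i < k"
  shows "distinct (concat (map (segment i) phases))"
proof (rule distinct_concat_map)
  show "distinct phases"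
    by (simp add: phases_def)
next
  fix p :: phase
  show "distinct (segment i p)"
    by (cases p) (simp_all add: distinct_geodesic distinct_tl)
next
  fix p q :: phase
  assume "p \<noteq> q"
  then show "set (segment i p) \<inter> set (segment i q) = {}"
    using segment_in_phase in_phase_unique assms by blast
qed

lemma hd_path: "i < k \<Longrightarrow> hd (path i) = start i"
  and last_path: "i < k \<Longrightarrow> last (path i) = stop i"
  by (simp_all add: path_def flip_walk_route)

lemma path_len_path:
  assumes "i < k"
  shows "start i = stop i \<Longrightarrow> path_len (path i) = 0"
    and "start i \<noteq> stop i \<Longrightarrow> 2 \<le> path_len (path i)"
  using assms by (simp_all add: path_def path_len_def flip_walk_route phases_def geodesic_def)

lemma internal_verts_path: "i < k \<Longrightarrow> internal_verts (path i) \<subseteq> {w. \<exists>p. in_phase i p w}"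
  using segment_in_phase by (auto simp: path_def internal_verts_def flip_walk_route butlast_append)

lemma cube_path_path:
  assumes "i < k"
  shows "cube_path n (path i)"
proof (cases "start i = stop i")
  case True
  then show ?thesis
    using assms by (simp add: path_def cube_path_def cube_vertex_def)
next
  case False
  have "S ! l \<notin> set (segment i p)" if "l < k" for l p
    using that assms segment_in_phase vertex_not_in_phase by blast
  then have "start i \<notin> set (concat (map (segment i) phases))"
    and "stop i \<notin> set (concat (map (segment i) phases))"
    using assms k_pos by (auto simp: start_eq stop_eq)
  then have "distinct (flip_walk (start i) (route i))"
    using assms False by (simp add: flip_walk_route distinct_segments)
  then show ?thesis
    using assms False route_less_n cube_path_flip_walk[of "start i" n "route i"]
    by (simp add: path_def)
qed

lemma subdivided_closed_walk_path: "subdivided_closed_walk n S (map path [0..<k])"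
  unfolding subdivided_closed_walk_def Let_def length_S
proof (intro conjI allI impI)
  fix i
  assume "i < k"
  then show "cube_path n (map path [0..<k] ! i)" and "hd (map path [0..<k] ! i) = S ! i"
    and "last (map path [0..<k] ! i) = S ! ((i + 1) mod k)"
    and "S ! i = S ! ((i + 1) mod k) \<Longrightarrow> path_len (map path [0..<k] ! i) = 0"
    and "S ! i \<noteq> S ! ((i + 1) mod k) \<Longrightarrow> 2 \<le> path_len (map path [0..<k] ! i)"
    using cube_path_path hd_path last_path path_len_path
    by (simp_all add: start_eq stop_eq)
next
  fix i j
  assume "i < k" and "j < k" and "i \<noteq> j"
  then have "internal_verts (path i) \<inter> internal_verts (path j) = {}"
    using internal_verts_path[of i] internal_verts_path[of j] in_phase_unique[of i _ _ j] by blast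
  then show "internal_verts (map path [0..<k] ! i) \<inter> internal_verts (map path [0..<k] ! j) = {}"
    using \<open>i < k\<close> \<open>j < k\<close> by simp
qed simp

end

lemma exists_tour:
  assumes "0 < k" and "length S = k" and "\<forall>v\<in>set S. length v = n" and "5 * k \<le> n"
  shows "\<exists>tag. tour n k S tag"
proof -
  let ?T = "{..<k} \<times> (UNIV :: bool set)" and ?C = "{2 * k..<n}" and ?F = "drop (2 * k) ` set S"
  let ?g = "\<lambda>t c. drop (2 * k) (flip c (endpoint S t))"
  have "inj_on (?g t) ?C" if "t \<in> ?T" for t
  proof (rule inj_onI)
    fix c c'
    assume c: "c \<in> ?C" and "c' \<in> ?C" and eq: "?g t c = ?g t c'"
    have len: "length (endpoint S t) = n"
      using that endpoint_in_set[of "fst t" S "snd t"] assms(2,3) by auto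
    have "drop (2 * k) (flip c (endpoint S t)) ! (c - 2 * k)
      = drop (2 * k) (flip c' (endpoint S t)) ! (c - 2 * k)"
      using eq by simp
    then have "flip c (endpoint S t) ! c = flip c' (endpoint S t) ! c"
      using c len by simp
    then show "c = c'"
      using c len by (auto simp: nth_flip split: if_splits)
  qed
  moreover have "card ?T + card ?F \<le> card ?C"
    using card_image_le[of "set S" "drop (2 * k)"] card_length[of S] assms(2,4)
    by (simp add: card_cartesian_product)
  ultimately obtain tag where "\<forall>t\<in>?T. tag t \<in> ?C \<and> ?g t (tag t) \<notin> ?F"
    and "inj_on (\<lambda>t. ?g t (tag t)) ?T"
    using greedy_distinct_choice[of ?T ?F ?C ?g] by auto
  with assms(1-3) have "tour n k S tag"
    by unfold_locales auto
  then show ?thesis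
    by blast
qed

theorem lemma3p9:
  fixes n k :: nat and S :: "bool list list"
  assumes "k \<ge> 4" and "n \<ge> 11 * k"
    and "length S = k" and "\<forall>v\<in>set S. cube_vertex n v"
  shows "\<exists>P. subdivided_closed_walk n S P"
proof -
  obtain tag where "tour n k S tag"
    using exists_tour[of k S n] assms by (auto simp: cube_vertex_def)
  then show ?thesis
    using tour.subdivided_closed_walk_path by blast
qed

end
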